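(* Assume $X$ is a semimartingale. Define the predictable set $$\Gamma^-:=\{(\omega,t,x): t<\tau(\omega),\ X_{t-}(\omega)=b(t),\ x<0\}.$$ If $\mathbf 1_{\Gamma^-}*\nu^X\equiv0$, then (almost surely) for every finite $t\ge0$, $\sup_{0\le s\le t}Y_s<0$ on $\{\tau>t\}$.
   Context: Let $(\Omega,\mathcal F,\mathbb F=(\mathcal F_t)_{t\ge0},\mathbb P)$ be a filtered probability space satisfying the usual conditions. Let $X$ be a real-valued $\mathbb F$-semimartingale (càdlàg) and $b:[0,\infty)\to\mathbb R$ a continuous deterministic function, with $X_0<b(0)$ identically. $X_{t-}$ denotes the left limit. Let $\mu^X(dt,dx):=\sum_{s>0:\Delta X_s\ne0}\delta_{(s,\Delta X_s)}(dt,dx)$ be the jump measure of $X$ and $\nu^X$ its predictable compensator. For a function $W\ge0$ on $\Omega\times[0,\infty)\times\mathbb R$, $(W*\mu)_t:=\int_0^t\int_{\mathbb R}W(s,x)\,\mu(ds,dx)$; "$\equiv0$" means identically zero up to evanescence. Set $Y_t:=X_t-b(t)$ and $\tau:=\inf\{t\ge0:Y_t\ge0\}$ ($\inf\emptyset=\infty$). *)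

theory Defs
  imports "HOL-Probability.Probability"
begin

definition usual_filtration :: "'a measure \<Rightarrow> (real \<Rightarrow> 'a measure) \<Rightarrow> bool" where
  "usual_filtration M F \<longleftrightarrow> prob_space M
     \<and> (\<forall>t\<ge>0. space (F t) = space M \<and> sets (F t) \<subseteq> sets M)
     \<and> (\<forall>s t. 0 \<le> s \<longrightarrow> s \<le> t \<longrightarrow> sets (F s) \<subseteq> sets (F t))
     \<and> (\<forall>t\<ge>0. sets (F t) = (\<Inter>s\<in>{t<..}. sets (F s)))
     \<and> (\<forall>N\<in>null_sets M. \<forall>A. A \<subseteq> N \<longrightarrow> A \<in> sets (F 0))"

definition cadlag :: "(real \<Rightarrow> real) \<Rightarrow> bool" where
  "cadlag f \<longleftrightarrow> (\<forall>t\<ge>0. continuous (at_right t) f) \<and> (\<forall>t>0. \<exists>l. (f \<longlongrightarrow> l) (at_left t))"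

text \<open>Left limit, with the usual convention f(0-) = f(0).\<close>
definition left_lim :: "(real \<Rightarrow> real) \<Rightarrow> real \<Rightarrow> real" where
  "left_lim f t = (if t \<le> 0 then f 0 else Lim (at_left t) f)"

definition jump :: "(real \<Rightarrow> real) \<Rightarrow> real \<Rightarrow> real" where
  "jump f t = f t - left_lim f t"

definition adapted :: "'a measure \<Rightarrow> (real \<Rightarrow> 'a measure) \<Rightarrow> (real \<Rightarrow> 'a \<Rightarrow> real) \<Rightarrow> bool" where
  "adapted M F X \<longleftrightarrow> (\<forall>t\<ge>0. X t \<in> borel_measurable (F t))"

definition cadlag_process :: "'a measure \<Rightarrow> (real \<Rightarrow> 'a \<Rightarrow> real) \<Rightarrow> bool" where
  "cadlag_process M X \<longleftrightarrow> (\<forall>\<omega>\<in>space M. cadlag (\<lambda>t. X t \<omega>))"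

definition stopping_time_R :: "'a measure \<Rightarrow> (real \<Rightarrow> 'a measure) \<Rightarrow> ('a \<Rightarrow> real) \<Rightarrow> bool" where
  "stopping_time_R M F T \<longleftrightarrow> (\<forall>\<omega>\<in>space M. 0 \<le> T \<omega>)
     \<and> (\<forall>t\<ge>0. {\<omega>\<in>space M. T \<omega> \<le> t} \<in> sets (F t))"

definition martingale :: "'a measure \<Rightarrow> (real \<Rightarrow> 'a measure) \<Rightarrow> (real \<Rightarrow> 'a \<Rightarrow> real) \<Rightarrow> bool" where
  "martingale M F L \<longleftrightarrow> adapted M F L \<and> (\<forall>t\<ge>0. integrable M (L t))
     \<and> (\<forall>s t. 0 \<le> s \<longrightarrow> s \<le> t \<longrightarrow> (AE \<omega> in M. real_cond_exp M (F s) (L t) \<omega> = L s \<omega>))"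

definition local_martingale :: "'a measure \<Rightarrow> (real \<Rightarrow> 'a measure) \<Rightarrow> (real \<Rightarrow> 'a \<Rightarrow> real) \<Rightarrow> bool" where
  "local_martingale M F L \<longleftrightarrow> adapted M F L \<and> cadlag_process M L
     \<and> (\<exists>T :: nat \<Rightarrow> 'a \<Rightarrow> real.
          (\<forall>n. stopping_time_R M F (T n))
        \<and> (\<forall>\<omega>\<in>space M. incseq (\<lambda>n. T n \<omega>))
        \<and> (AE \<omega> in M. filterlim (\<lambda>n. T n \<omega>) at_top sequentially)
        \<and> (\<forall>n. martingale M F (\<lambda>t \<omega>. L (min t (T n \<omega>)) \<omega>)))"

definition finite_variation_on :: "(real \<Rightarrow> real) \<Rightarrow> real \<Rightarrow> real \<Rightarrow> bool" where
  "finite_variation_on f a b \<longleftrightarrow>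
     bdd_above {(\<Sum>i<n. \<bar>f (p (Suc i)) - f (p i)\<bar>) | p n. p 0 = a \<and> p n = b \<and> incseq p}"

definition semimartingale :: "'a measure \<Rightarrow> (real \<Rightarrow> 'a measure) \<Rightarrow> (real \<Rightarrow> 'a \<Rightarrow> real) \<Rightarrow> bool" where
  "semimartingale M F X \<longleftrightarrow> adapted M F X \<and> cadlag_process M X
     \<and> (\<exists>L A. local_martingale M F L \<and> (\<forall>\<omega>\<in>space M. L 0 \<omega> = 0)
        \<and> adapted M F A \<and> cadlag_process M A
        \<and> (\<forall>\<omega>\<in>space M. A 0 \<omega> = 0 \<and> (\<forall>t\<ge>0. finite_variation_on (\<lambda>s. A s \<omega>) 0 t))
        \<and> (\<forall>\<omega>\<in>space M. \<forall>t\<ge>0. X t \<omega> = X 0 \<omega> + L t \<omega> + A t \<omega>))"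

definition pred_sigma :: "'a measure \<Rightarrow> (real \<Rightarrow> 'a measure) \<Rightarrow> ('a \<times> real) measure" where
  "pred_sigma M F = sigma (space M \<times> {0..})
     ({A \<times> {0} | A. A \<in> sets (F 0)} \<union> {A \<times> {s<..t} | A s t. 0 \<le> s \<and> s \<le> t \<and> A \<in> sets (F s)})"

definition predictable_fun :: "'a measure \<Rightarrow> (real \<Rightarrow> 'a measure) \<Rightarrow> ('a \<Rightarrow> real \<Rightarrow> real \<Rightarrow> ennreal) \<Rightarrow> bool" where
  "predictable_fun M F W \<longleftrightarrow>
     (\<lambda>((\<omega>, t), x). W \<omega> t x) \<in> borel_measurable (pred_sigma M F \<Otimes>\<^sub>M (borel :: real measure))"

text \<open>Random measures are families of measures on (time, mark) = R x R.
  (W * rho)_t (omega) and (W * rho)_oo (omega).\<close>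
definition rm_int :: "('a \<Rightarrow> real \<Rightarrow> real \<Rightarrow> ennreal) \<Rightarrow> ('a \<Rightarrow> (real \<times> real) measure) \<Rightarrow> 'a \<Rightarrow> real \<Rightarrow> ennreal" where
  "rm_int W \<rho> \<omega> t = (\<integral>\<^sup>+ z. indicator {0..t} (fst z) * W \<omega> (fst z) (snd z) \<partial>\<rho> \<omega>)"

definition rm_int_inf :: "('a \<Rightarrow> real \<Rightarrow> real \<Rightarrow> ennreal) \<Rightarrow> ('a \<Rightarrow> (real \<times> real) measure) \<Rightarrow> 'a \<Rightarrow> ennreal" where
  "rm_int_inf W \<rho> \<omega> = (\<integral>\<^sup>+ z. indicator {0..} (fst z) * W \<omega> (fst z) (snd z) \<partial>\<rho> \<omega>)"

text \<open>Jump measure mu^X(omega) = sum over s>0 with Delta X_s /= 0 of Dirac at (s, Delta X_s).\<close>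
definition jump_measure :: "(real \<Rightarrow> 'a \<Rightarrow> real) \<Rightarrow> 'a \<Rightarrow> (real \<times> real) measure" where
  "jump_measure X \<omega> = measure_of UNIV (sets (borel :: (real \<times> real) measure))
     (\<lambda>A. \<integral>\<^sup>+ s. indicator A (s, jump (\<lambda>t. X t \<omega>) s)
            \<partial>count_space {s. 0 < s \<and> jump (\<lambda>t. X t \<omega>) s \<noteq> 0})"

definition predictable_random_measure :: "'a measure \<Rightarrow> (real \<Rightarrow> 'a measure) \<Rightarrow> ('a \<Rightarrow> (real \<times> real) measure) \<Rightarrow> bool" where
  "predictable_random_measure M F \<nu> \<longleftrightarrow>
     (\<forall>\<omega>\<in>space M. sets (\<nu> \<omega>) = sets (borel :: (real \<times> real) measure)
                  \<and> emeasure (\<nu> \<omega>) ({..0} \<times> UNIV) = 0)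
     \<and> (\<forall>W. predictable_fun M F W \<longrightarrow>
           (\<lambda>(\<omega>, t). rm_int W \<nu> \<omega> t) \<in> borel_measurable (pred_sigma M F))"

text \<open>Predictable compensator (Jacod--Shiryaev II.1.8).\<close>
definition compensator :: "'a measure \<Rightarrow> (real \<Rightarrow> 'a measure) \<Rightarrow> ('a \<Rightarrow> (real \<times> real) measure)
    \<Rightarrow> ('a \<Rightarrow> (real \<times> real) measure) \<Rightarrow> bool" where
  "compensator M F \<mu> \<nu> \<longleftrightarrow> predictable_random_measure M F \<nu>
     \<and> (\<forall>W. predictable_fun M F W \<longrightarrow>
           (\<integral>\<^sup>+ \<omega>. rm_int_inf W \<mu> \<omega> \<partial>M) = (\<integral>\<^sup>+ \<omega>. rm_int_inf W \<nu> \<omega> \<partial>M))"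

text \<open>tau = inf {t >= 0 : X_t - b(t) >= 0}, with inf of the empty set = oo.\<close>
definition hit_time :: "(real \<Rightarrow> 'a \<Rightarrow> real) \<Rightarrow> (real \<Rightarrow> real) \<Rightarrow> 'a \<Rightarrow> ereal" where
  "hit_time X b \<omega> = (INF t \<in> {t. 0 \<le> t \<and> X t \<omega> - b t \<ge> 0}. ereal t)"

definition Gamma_minus :: "'a measure \<Rightarrow> (real \<Rightarrow> 'a \<Rightarrow> real) \<Rightarrow> (real \<Rightarrow> real) \<Rightarrow> ('a \<times> real \<times> real) set" where
  "Gamma_minus M X b = {(\<omega>, t, x). \<omega> \<in> space M \<and> 0 \<le> t \<and> ereal t < hit_time X b \<omega>
       \<and> left_lim (\<lambda>s. X s \<omega>) t = b t \<and> x < 0}"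

end

theory Submission
  imports Defs
begin

text \<open>Suppose \<open>\<tau> > t\<close> although the supremum of \<open>Y\<close> over \<open>[0,t]\<close> is not negative. As \<open>Y < 0\<close>
  on \<open>[0,t]\<close>, there is a first time \<open>u \<le> t\<close> at which \<open>Y\<close> creeps up to \<open>0\<close> from below:
  \<open>Y(u-) = 0\<close>, although \<open>Y\<close> is uniformly negative on every \<open>[0,r]\<close> with \<open>r < u\<close>. Since
  \<open>Y(u) < 0\<close>, \<open>X\<close> jumps downwards at \<open>u\<close> and \<open>(u, \<Delta>X\<^sub>u) \<in> \<Gamma>\<^sup>-\<close>. First approach times can be
  read off from rational times, so the indicator \<open>W\<close> of negative jumps at the first approach,
  cut off where \<open>\<nu>\<close> already charges it, is predictable, and \<open>W * \<nu> = 0\<close>. By compensation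
  \<open>W * \<mu>\<^sup>X = 0\<close> almost surely. Under the hypothesis on \<open>\<Gamma>\<^sup>-\<close> the cut-off is inactive at \<open>u\<close>,
  so \<open>W * \<mu>\<^sup>X \<ge> 1\<close> on the bad event, which is therefore null.\<close>

section \<open>Paths creeping up to zero\<close>

definition uniformly_negative_on :: "(real \<Rightarrow> real) \<Rightarrow> real set \<Rightarrow> bool" where
  "uniformly_negative_on y S \<longleftrightarrow> (\<exists>e\<in>\<rat>. 0 < e \<and> (\<forall>q\<in>S. y q \<le> - e))"

lemma uniformly_negative_onI:
  assumes "0 < e" and "\<And>q. q \<in> S \<Longrightarrow> y q \<le> - e"
  shows "uniformly_negative_on y S"
proof -
  obtain e' where "e' \<in> \<rat>" "0 < e'" "e' < e"
    using Rats_dense_in_real[OF \<open>0 < e\<close>] by blast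
  then show ?thesis
    unfolding uniformly_negative_on_def using assms(2) by (force intro!: bexI[of _ e'])
qed

lemma uniformly_negative_on_subset:
  "uniformly_negative_on y S \<Longrightarrow> T \<subseteq> S \<Longrightarrow> uniformly_negative_on y T"
  unfolding uniformly_negative_on_def by blast

lemma uniformly_negative_on_Un:
  assumes "uniformly_negative_on y S" and "uniformly_negative_on y T"
  shows "uniformly_negative_on y (S \<union> T)"
proof -
  obtain e e' where "0 < e" "\<forall>q\<in>S. y q \<le> - e" "0 < e'" "\<forall>q\<in>T. y q \<le> - e'"
    using assms unfolding uniformly_negative_on_def by blast
  then show ?thesis
    by (intro uniformly_negative_onI[of "min e e'"]) force+
qed

lemma SUP_less_zero_if_uniformly_negative_on:
  assumes "S \<noteq> {}" and "uniformly_negative_on y S"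
  shows "(SUP s\<in>S. y s) < 0"
proof -
  obtain e where "0 < e" "\<forall>s\<in>S. y s \<le> - e"
    using assms(2) unfolding uniformly_negative_on_def by blast
  then have "(SUP s\<in>S. y s) \<le> - e"
    using assms(1) by (intro cSUP_least) auto
  then show ?thesis using \<open>0 < e\<close> by simp
qed

lemma uniformly_negative_on_singleton: "y t < 0 \<Longrightarrow> uniformly_negative_on y {t}"
  by (rule uniformly_negative_onI[of "- y t"]) auto

text \<open>Only rational times are inspected, so that these notions are measurable for adapted
  processes.\<close>

definition left_limit_zero :: "(real \<Rightarrow> real) \<Rightarrow> real \<Rightarrow> bool" where
  "left_limit_zero y t \<longleftrightarrow>
     (\<forall>e\<in>\<rat> \<inter> {0<..}. \<exists>r\<in>\<rat> \<inter> {0..<t}. \<forall>q\<in>\<rat> \<inter> {r<..<t}. \<bar>y q\<bar> \<le> e)"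

definition first_approach :: "(real \<Rightarrow> real) \<Rightarrow> real \<Rightarrow> bool" where
  "first_approach y t \<longleftrightarrow> 0 < t \<and> left_limit_zero y t
     \<and> (\<forall>r\<in>\<rat> \<inter> {0..<t}. uniformly_negative_on y (\<rat> \<inter> {0..r}))"

definition right_negative :: "(real \<Rightarrow> real) \<Rightarrow> real \<Rightarrow> bool" where
  "right_negative y t \<longleftrightarrow> (\<exists>r\<in>\<rat> \<inter> {t<..}. uniformly_negative_on y (\<rat> \<inter> {t<..<r}))"

lemma left_limit_zero_iff:
  assumes "0 < t" and lim: "(y \<longlongrightarrow> l) (at_left t)"
  shows "left_limit_zero y t \<longleftrightarrow> l = 0"
proof
  assume zero: "left_limit_zero y t"
  show "l = 0"
  proof (rule ccontr)
    assume "l \<noteq> 0"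
    then obtain e where e: "e \<in> \<rat>" "0 < e" "e < \<bar>l\<bar> / 2"
      using Rats_dense_in_real[of 0 "\<bar>l\<bar> / 2"] by auto
    then obtain r where r: "r \<in> \<rat> \<inter> {0..<t}" and small: "\<forall>q\<in>\<rat> \<inter> {r<..<t}. \<bar>y q\<bar> \<le> e"
      using zero unfolding left_limit_zero_def by (meson IntI greaterThan_iff)
    have "\<forall>\<^sub>F s in at_left t. dist (y s) l < \<bar>l\<bar> / 2"
      using tendstoD[OF lim, of "\<bar>l\<bar> / 2"] \<open>l \<noteq> 0\<close> by simp
    then obtain a where a: "a < t" "\<And>s. a < s \<Longrightarrow> s < t \<Longrightarrow> dist (y s) l < \<bar>l\<bar> / 2"
      unfolding eventually_at_left_field by blast
    obtain q where q: "q \<in> \<rat>" "max a r < q" "q < t"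
      using Rats_dense_in_real[of "max a r" t] a(1) r by auto
    have "\<bar>y q\<bar> \<le> e" using small q by auto
    moreover have "dist (y q) l < \<bar>l\<bar> / 2" using a q by auto
    ultimately show False using e by (simp add: dist_real_def) argo
  qed
next
  assume "l = 0"
  show "left_limit_zero y t"
    unfolding left_limit_zero_def
  proof
    fix e :: real assume "e \<in> \<rat> \<inter> {0<..}"
    then have "\<forall>\<^sub>F s in at_left t. dist (y s) 0 < e"
      using tendstoD[OF lim] \<open>l = 0\<close> by simp
    then obtain a where a: "a < t" "\<And>s. a < s \<Longrightarrow> s < t \<Longrightarrow> dist (y s) 0 < e"
      unfolding eventually_at_left_field by blast
    obtain r where "r \<in> \<rat>" "max a 0 < r" "r < t"
      using Rats_dense_in_real[of "max a 0" t] a(1) \<open>0 < t\<close> by auto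
    with a show "\<exists>r\<in>\<rat> \<inter> {0..<t}. \<forall>q\<in>\<rat> \<inter> {r<..<t}. \<bar>y q\<bar> \<le> e"
      by (intro bexI[of _ r]) (auto simp: dist_real_def intro: less_imp_le)
  qed
qed

lemma right_negative_iff:
  assumes "continuous (at_right t) y"
  shows "right_negative y t \<longleftrightarrow> y t < 0"
proof
  have lim: "(y \<longlongrightarrow> y t) (at_right t)"
    using assms by (simp add: continuous_within)
  assume "right_negative y t"
  then obtain r e where r: "t < r" and "0 < e"
    and bound: "\<forall>q\<in>\<rat> \<inter> {t<..<r}. y q \<le> - e"
    unfolding right_negative_def uniformly_negative_on_def by auto
  have "y t \<le> - e"
  proof (rule ccontr)
    assume "\<not> y t \<le> - e"
    then have "\<forall>\<^sub>F s in at_right t. - e < y s"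
      using order_tendstoD(1)[OF lim] by simp
    then obtain a where a: "t < a" "\<And>s. t < s \<Longrightarrow> s < a \<Longrightarrow> - e < y s"
      unfolding eventually_at_right_field by blast
    obtain q where "q \<in> \<rat>" "t < q" "q < min a r"
      using Rats_dense_in_real[of t "min a r"] a(1) r by auto
    then show False using a(2)[of q] bound by force
  qed
  then show "y t < 0" using \<open>0 < e\<close> by simp
next
  assume neg: "y t < 0"
  then have "\<forall>\<^sub>F s in at_right t. y s < y t / 2"
    using assms by (intro order_tendstoD(2)) (auto simp: continuous_within)
  then obtain a where a: "t < a" "\<And>s. t < s \<Longrightarrow> s < a \<Longrightarrow> y s < y t / 2"
    unfolding eventually_at_right_field by blast
  obtain r where "r \<in> \<rat>" "t < r" "r < a"
    using Rats_dense_in_real[OF a(1)] by blast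
  moreover have "uniformly_negative_on y (\<rat> \<inter> {t<..<r})"
    using neg a \<open>r < a\<close> by (intro uniformly_negative_onI[of "- y t / 2"]) force+
  ultimately show "right_negative y t"
    unfolding right_negative_def by blast
qed

lemma first_approach_not_negative_beyond:
  assumes "first_approach y t" and "t \<le> r"
  shows "\<not> uniformly_negative_on y (\<rat> \<inter> {0..r})"
proof
  assume "uniformly_negative_on y (\<rat> \<inter> {0..r})"
  then obtain e where e: "e \<in> \<rat>" "0 < e" and bound: "\<forall>q\<in>\<rat> \<inter> {0..r}. y q \<le> - e"
    unfolding uniformly_negative_on_def by blast
  have "e / 2 \<in> \<rat> \<inter> {0<..}" using e by simp
  then obtain r' where r': "r' \<in> \<rat> \<inter> {0..<t}" and small: "\<forall>q\<in>\<rat> \<inter> {r'<..<t}. \<bar>y q\<bar> \<le> e / 2"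
    using assms(1) unfolding first_approach_def left_limit_zero_def by blast
  obtain q where q: "q \<in> \<rat>" "r' < q" "q < t"
    using Rats_dense_in_real[of r' t] r' by auto
  have "y q \<le> - e" using bound q r' assms(2) by auto
  moreover have "\<bar>y q\<bar> \<le> e / 2" using small q by auto
  ultimately show False using e by argo
qed

lemma first_approach_unique:
  assumes "first_approach y t" and "first_approach y t'"
  shows "t = t'"
proof -
  have False if "first_approach y t1" "first_approach y t2" "t1 < t2" for t1 t2
  proof -
    obtain r where "r \<in> \<rat>" "t1 < r" "r < t2"
      using Rats_dense_in_real[OF \<open>t1 < t2\<close>] by blast
    moreover have "0 < t1" using that(1) by (simp add: first_approach_def)
    ultimately have "uniformly_negative_on y (\<rat> \<inter> {0..r})"
      using that(2) unfolding first_approach_def by simp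
    then show False
      using first_approach_not_negative_beyond[OF that(1)] \<open>t1 < r\<close> by simp
  qed
  then show ?thesis using assms by (meson linorder_cases)
qed

text \<open>A measurable choice of the (unique) first approach time; its value is irrelevant for
  paths without one.\<close>

definition first_approach_time :: "(real \<Rightarrow> real) \<Rightarrow> real" where
  "first_approach_time y = real_of_ereal
     (SUP r\<in>\<rat> \<inter> {0..}. if uniformly_negative_on y (\<rat> \<inter> {0..r}) then ereal r else 0)"

lemma first_approach_time_nonneg: "0 \<le> first_approach_time y"
proof -
  have "0 \<le> (SUP r\<in>\<rat> \<inter> {0..}. if uniformly_negative_on y (\<rat> \<inter> {0..r}) then ereal r else 0)"
    by (rule SUP_upper2[of 0]) auto
  then show ?thesis
    unfolding first_approach_time_def by (simp add: real_of_ereal_pos)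
qed

lemma first_approach_time_eq:
  assumes "first_approach y t"
  shows "first_approach_time y = t"
proof -
  have "0 < t" using assms by (simp add: first_approach_def)
  have "(SUP r\<in>\<rat> \<inter> {0..}. if uniformly_negative_on y (\<rat> \<inter> {0..r}) then ereal r else 0) = ereal t"
  proof (rule antisym)
    show "(SUP r\<in>\<rat> \<inter> {0..}. if uniformly_negative_on y (\<rat> \<inter> {0..r}) then ereal r else 0) \<le> ereal t"
      using first_approach_not_negative_beyond[OF assms] \<open>0 < t\<close>
      by (intro SUP_least) (auto, meson linear)
    show "ereal t \<le> (SUP r\<in>\<rat> \<inter> {0..}. if uniformly_negative_on y (\<rat> \<inter> {0..r}) then ereal r else 0)"
    proof (rule dense_le)
      fix x assume "x < ereal t"
      then obtain s where "x < ereal s" "s < t"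
        using ereal_dense2 by force
      then obtain r where "r \<in> \<rat>" "max s 0 < r" "r < t"
        using Rats_dense_in_real[of "max s 0" t] \<open>0 < t\<close> by auto
      moreover from this \<open>x < ereal s\<close> have "x \<le> ereal r"
        by (cases x) auto
      ultimately show "x \<le> (SUP r\<in>\<rat> \<inter> {0..}. if uniformly_negative_on y (\<rat> \<inter> {0..r}) then ereal r else 0)"
        using assms unfolding first_approach_def by (intro SUP_upper2[of r]) auto
    qed
  qed
  then show ?thesis unfolding first_approach_time_def by simp
qed

lemma left_lim_eqI: "0 < t \<Longrightarrow> (f \<longlongrightarrow> l) (at_left t) \<Longrightarrow> left_lim f t = l"
  unfolding left_lim_def by (simp add: tendsto_Lim)

lemma cadlag_left_lim:
  assumes "cadlag f" and "0 < t"
  shows "(f \<longlongrightarrow> left_lim f t) (at_left t)"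
proof -
  obtain l where "(f \<longlongrightarrow> l) (at_left t)"
    using assms by (auto simp: cadlag_def)
  then show ?thesis using left_lim_eqI[OF assms(2)] by simp
qed

lemma left_lim_diff_continuous:
  assumes "cadlag x" and b: "continuous_on {0..} b" and "0 < t"
  shows "((\<lambda>s. x s - b s) \<longlongrightarrow> left_lim x t - b t) (at_left t)"
proof -
  have "isCont b t"
    using continuous_on_interior[OF b] \<open>0 < t\<close> by simp
  then have "(b \<longlongrightarrow> b t) (at_left t)"
    by (simp add: isCont_def filterlim_at_split)
  then show ?thesis
    using cadlag_left_lim[OF assms(1) \<open>0 < t\<close>] by (intro tendsto_diff)
qed

lemma cadlag_diff_continuous:
  assumes "cadlag x" and b: "continuous_on {0..} b"
  shows "cadlag (\<lambda>s. x s - b s)"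
  unfolding cadlag_def
proof safe
  fix t :: real assume "0 \<le> t"
  then have "continuous (at_right t) b"
    using b by (auto simp: continuous_on_eq_continuous_within intro: continuous_within_subset)
  then show "continuous (at_right t) (\<lambda>s. x s - b s)"
    using assms(1) \<open>0 \<le> t\<close> by (intro continuous_diff) (auto simp: cadlag_def)
next
  fix t :: real assume "0 < t"
  then show "\<exists>l. ((\<lambda>s. x s - b s) \<longlongrightarrow> l) (at_left t)"
    using left_lim_diff_continuous[OF assms] by blast
qed

lemma first_approach_left_lim:
  assumes "cadlag y" and "first_approach y t"
  shows "left_lim y t = 0"
  using assms left_limit_zero_iff[OF _ cadlag_left_lim[OF assms(1)]]
  unfolding first_approach_def by blast

lemma left_lim_at_first_approach:
  assumes "cadlag x" and b: "continuous_on {0..} b" and "first_approach (\<lambda>s. x s - b s) t"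
  shows "left_lim x t = b t"
proof -
  have "0 < t" using assms(3) by (simp add: first_approach_def)
  have "left_lim (\<lambda>s. x s - b s) t = left_lim x t - b t"
    using left_lim_eqI[OF \<open>0 < t\<close> left_lim_diff_continuous[OF assms(1,2) \<open>0 < t\<close>]] .
  moreover have "left_lim (\<lambda>s. x s - b s) t = 0"
    using first_approach_left_lim[OF cadlag_diff_continuous[OF assms(1,2)] assms(3)] .
  ultimately show ?thesis by simp
qed

lemma uniformly_negative_on_extend_right:
  assumes "continuous (at_right v) y" and "y v < 0" and "uniformly_negative_on y {0..v}"
  obtains w where "v < w" and "uniformly_negative_on y {0..w}"
proof -
  have "\<forall>\<^sub>F s in at_right v. y s < y v / 2"
    using assms(1,2) by (intro order_tendstoD(2)) (auto simp: continuous_within)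
  then obtain a where a: "v < a" "\<And>s. v < s \<Longrightarrow> s < a \<Longrightarrow> y s < y v / 2"
    unfolding eventually_at_right_field by blast
  have "uniformly_negative_on y {v<..(v + a) / 2}"
    using a assms(2) by (intro uniformly_negative_onI[of "- y v / 2"]) force+
  then have "uniformly_negative_on y ({0..v} \<union> {v<..(v + a) / 2})"
    using assms(3) by (rule uniformly_negative_on_Un[rotated])
  moreover have "{0..(v + a) / 2} \<subseteq> {0..v} \<union> {v<..(v + a) / 2}" by auto
  ultimately show thesis
    using that[of "(v + a) / 2"] a(1) uniformly_negative_on_subset by auto
qed

lemma uniformly_negative_on_extend_left_limit:
  assumes lim: "(y \<longlongrightarrow> l) (at_left u)" and "l < 0" and "y u < 0" and "0 < u"
    and before: "\<And>r. 0 \<le> r \<Longrightarrow> r < u \<Longrightarrow> uniformly_negative_on y {0..r}"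
  shows "uniformly_negative_on y {0..u}"
proof -
  have "\<forall>\<^sub>F s in at_left u. y s < l / 2"
    using lim \<open>l < 0\<close> by (intro order_tendstoD(2)) auto
  then obtain a where a: "a < u" "\<And>s. a < s \<Longrightarrow> s < u \<Longrightarrow> y s < l / 2"
    unfolding eventually_at_left_field by blast
  define r where "r = max 0 a"
  have "0 \<le> r" "r < u" using a(1) \<open>0 < u\<close> by (auto simp: r_def)
  have "uniformly_negative_on y {r<..<u}"
    using a \<open>l < 0\<close> by (intro uniformly_negative_onI[of "- l / 2"]) (force simp: r_def)+
  then have "uniformly_negative_on y ({0..r} \<union> {r<..<u} \<union> {u})"
    using before[OF \<open>0 \<le> r\<close> \<open>r < u\<close>] uniformly_negative_on_singleton[of y u] \<open>y u < 0\<close>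
    by (intro uniformly_negative_on_Un)
  moreover have "{0..u} \<subseteq> {0..r} \<union> {r<..<u} \<union> {u}" by auto
  ultimately show ?thesis by (rule uniformly_negative_on_subset)
qed

lemma first_approachI:
  assumes "cadlag y" and "0 < u" and neg: "\<forall>s\<in>{0..u}. y s < 0"
    and before: "\<And>r. 0 \<le> r \<Longrightarrow> r < u \<Longrightarrow> uniformly_negative_on y {0..r}"
    and not_neg: "\<not> uniformly_negative_on y {0..u}"
  shows "first_approach y u"
proof -
  have lim: "(y \<longlongrightarrow> left_lim y u) (at_left u)"
    using cadlag_left_lim[OF assms(1,2)] .
  have "left_lim y u \<le> 0"
  proof (rule tendsto_upperbound[OF lim])
    show "\<forall>\<^sub>F s in at_left u. y s \<le> 0"
      unfolding eventually_at_left_field using neg \<open>0 < u\<close>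
      by (intro exI[of _ 0]) (auto intro: less_imp_le)
  qed simp
  moreover have "\<not> left_lim y u < 0"
    using uniformly_negative_on_extend_left_limit[OF lim _ _ \<open>0 < u\<close> before] neg not_neg
      \<open>0 < u\<close> by auto
  ultimately have "left_limit_zero y u"
    using left_limit_zero_iff[OF \<open>0 < u\<close> lim] by simp
  moreover have "uniformly_negative_on y (\<rat> \<inter> {0..r})" if "r \<in> \<rat> \<inter> {0..<u}" for r
    using before[of r] that by (auto elim: uniformly_negative_on_subset)
  ultimately show ?thesis
    using \<open>0 < u\<close> by (simp add: first_approach_def)
qed

lemma first_approach_exists:
  assumes "cadlag y" and "0 \<le> t" and neg: "\<forall>s\<in>{0..t}. y s < 0"
    and not_neg: "\<not> (SUP s\<in>{0..t}. y s) < 0"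
  obtains u where "0 < u" and "u \<le> t" and "first_approach y u"
proof -
  define T where "T = {v\<in>{0..t}. uniformly_negative_on y {0..v}}"
  define u where "u = Sup T"
  have "0 \<in> T"
    using neg \<open>0 \<le> t\<close> uniformly_negative_on_singleton[of y 0] by (simp add: T_def)
  have "bdd_above T"
    by (rule bdd_aboveI[of _ t]) (simp add: T_def)
  have "0 \<le> u" "u \<le> t"
    using cSup_upper[OF \<open>0 \<in> T\<close> \<open>bdd_above T\<close>] \<open>0 \<in> T\<close>
    by (auto simp: u_def T_def intro!: cSup_least)
  have before: "uniformly_negative_on y {0..r}" if "0 \<le> r" "r < u" for r
  proof -
    obtain v where "v \<in> T" "r < v"
      using less_cSupD[of T r] \<open>0 \<in> T\<close> \<open>r < u\<close> by (auto simp: u_def)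
    then show ?thesis
      by (auto simp: T_def elim: uniformly_negative_on_subset)
  qed
  have "u \<notin> T"
  proof
    assume "u \<in> T"
    then have u_neg: "uniformly_negative_on y {0..u}" by (simp add: T_def)
    have "u \<noteq> t"
      using SUP_less_zero_if_uniformly_negative_on[OF _ u_neg] not_neg \<open>0 \<le> u\<close> by auto
    moreover obtain w where "u < w" "uniformly_negative_on y {0..w}"
      using uniformly_negative_on_extend_right[OF _ _ u_neg] assms(1) neg \<open>0 \<le> u\<close> \<open>u \<le> t\<close>
      by (auto simp: cadlag_def)
    ultimately have "min w t \<in> T" "u < min w t"
      using \<open>0 \<le> u\<close> \<open>u \<le> t\<close> by (auto simp: T_def elim: uniformly_negative_on_subset)
    then show False
      using cSup_upper[OF _ \<open>bdd_above T\<close>, of "min w t"] unfolding u_def by linarith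
  qed
  then have "0 < u" using \<open>0 \<in> T\<close> \<open>0 \<le> u\<close> by (cases "u = 0") auto
  moreover have "first_approach y u"
    using \<open>u \<notin> T\<close> neg \<open>0 \<le> u\<close> \<open>u \<le> t\<close>
    by (intro first_approachI[OF assms(1) \<open>0 < u\<close> _ before]) (auto simp: T_def)
  ultimately show thesis using that \<open>u \<le> t\<close> by blast
qed

section \<open>Integrals against random measures\<close>

lemma jump_measure_eq_distr:
  "jump_measure X \<omega> = distr (count_space {s. 0 < s \<and> jump (\<lambda>t. X t \<omega>) s \<noteq> 0}) borel
      (\<lambda>s. (s, jump (\<lambda>t. X t \<omega>) s))"
proof -
  define S where "S = {s. 0 < s \<and> jump (\<lambda>t. X t \<omega>) s \<noteq> 0}"
  define g where "g s = (s, jump (\<lambda>t. X t \<omega>) s)" for s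
  have "(\<integral>\<^sup>+ s. indicator A (g s) \<partial>count_space S) = emeasure (count_space S) (g -` A \<inter> S)" for A
  proof -
    have "(\<integral>\<^sup>+ s. indicator A (g s) \<partial>count_space S) = (\<integral>\<^sup>+ s. indicator (g -` A \<inter> S) s \<partial>count_space S)"
      by (intro nn_integral_cong) (auto split: split_indicator)
    then show ?thesis by simp
  qed
  then show ?thesis
    unfolding jump_measure_def distr_def S_def[symmetric] g_def[symmetric] by simp
qed

lemma jump_le_rm_int_inf_jump_measure:
  assumes "0 < s" and "jump (\<lambda>t. X t \<omega>) s \<noteq> 0"
  shows "W \<omega> s (jump (\<lambda>t. X t \<omega>) s) \<le> rm_int_inf W (jump_measure X) \<omega>"
proof -
  define S where "S = {s. 0 < s \<and> jump (\<lambda>t. X t \<omega>) s \<noteq> 0}"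
  define g where "g s = (s, jump (\<lambda>t. X t \<omega>) s)" for s
  define N where "N = distr (count_space S) borel g"
  have "g \<in> measurable (count_space S) borel"
    by (rule measurableI) auto
  moreover have "g -` {g s} \<inter> space (count_space S) = {s}"
    using assms by (auto simp: S_def g_def)
  ultimately have "emeasure N {g s} = 1"
    using assms unfolding N_def by (subst emeasure_distr) (auto simp: S_def)
  then have "W \<omega> s (jump (\<lambda>t. X t \<omega>) s)
      = (\<integral>\<^sup>+ z. W \<omega> s (jump (\<lambda>t. X t \<omega>) s) * indicator {g s} z \<partial>N)"
    by (subst nn_integral_cmult_indicator) (auto simp: N_def)
  also have "\<dots> \<le> (\<integral>\<^sup>+ z. indicator {0..} (fst z) * W \<omega> (fst z) (snd z) \<partial>N)"
    using assms by (intro nn_integral_mono) (auto simp: g_def split: split_indicator)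
  also have "\<dots> = rm_int_inf W (jump_measure X) \<omega>"
    unfolding rm_int_inf_def jump_measure_eq_distr N_def S_def g_def ..
  finally show ?thesis .
qed

lemma rm_int_mono:
  assumes "\<And>s x. 0 \<le> s \<Longrightarrow> s \<le> t \<Longrightarrow> W \<omega> s x \<le> V \<omega> s x"
  shows "rm_int W \<rho> \<omega> t \<le> rm_int V \<rho> \<omega> t"
  unfolding rm_int_def
  using assms by (intro nn_integral_mono) (auto split: split_indicator)

lemma rm_int_inf_le_rm_int:
  assumes "\<And>s x. W \<omega> s x \<noteq> 0 \<Longrightarrow> s \<le> t"
  shows "rm_int_inf W \<rho> \<omega> \<le> rm_int W \<rho> \<omega> t"
  unfolding rm_int_inf_def rm_int_def
  using assms by (intro nn_integral_mono) (force split: split_indicator)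

section \<open>Predictability\<close>

lemma space_pred_sigma: "space (pred_sigma M F) = space M \<times> {0..}"
  unfolding pred_sigma_def by (simp add: space_measure_of_conv)

lemma adapted_diff_deterministic: "adapted M F X \<Longrightarrow> adapted M F (\<lambda>s \<omega>. X s \<omega> - b s)"
  unfolding adapted_def by (intro allI impI borel_measurable_diff borel_measurable_const) auto

context
  fixes M :: "'a measure" and F :: "real \<Rightarrow> 'a measure"
  assumes filtration: "usual_filtration M F"
begin

lemma space_F: "0 \<le> t \<Longrightarrow> space (F t) = space M"
  and sets_F: "0 \<le> t \<Longrightarrow> sets (F t) \<subseteq> sets M"
  using filtration[unfolded usual_filtration_def, THEN conjunct2, THEN conjunct1] by blast+

lemma sets_F_mono: "0 \<le> s \<Longrightarrow> s \<le> t \<Longrightarrow> sets (F s) \<subseteq> sets (F t)"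
  using filtration[unfolded usual_filtration_def, THEN conjunct2, THEN conjunct2, THEN conjunct1]
  by blast

lemma subalgebra_F: "0 \<le> t \<Longrightarrow> subalgebra M (F t)"
  by (simp add: subalgebra_def space_F sets_F)

lemma subalgebra_F_mono: "0 \<le> s \<Longrightarrow> s \<le> t \<Longrightarrow> subalgebra (F t) (F s)"
  by (simp add: subalgebra_def space_F sets_F_mono)

lemma adapted_measurable_F:
  "adapted M F Y \<Longrightarrow> 0 \<le> s \<Longrightarrow> s \<le> t \<Longrightarrow> Y s \<in> borel_measurable (F t)"
  by (rule measurable_from_subalg[OF subalgebra_F_mono]) (auto simp: adapted_def)

lemma adapted_measurable:
  "adapted M F Y \<Longrightarrow> 0 \<le> s \<Longrightarrow> Y s \<in> borel_measurable M"
  by (rule measurable_from_subalg[OF subalgebra_F]) (auto simp: adapted_def)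

lemma uniformly_negative_on_measurable_F:
  assumes "adapted M F Y" and "0 \<le> d"
  shows "Measurable.pred (F d) (\<lambda>\<omega>. uniformly_negative_on (\<lambda>s. Y s \<omega>) (\<rat> \<inter> {0..d}))"
  unfolding uniformly_negative_on_def
proof (intro measurable_pred_countable countable_rat countable_Int1 pred_intros_conj1')
  fix q e :: real assume "q \<in> \<rat> \<inter> {0..d}"
  then have [measurable]: "Y q \<in> borel_measurable (F d)"
    using adapted_measurable_F[OF assms(1)] by auto
  show "Measurable.pred (F d) (\<lambda>\<omega>. Y q \<omega> \<le> - e)" by measurable
qed

lemma pred_sigma_generators_subset:
  "{A \<times> {0} | A. A \<in> sets (F 0)} \<union> {A \<times> {s<..t} | A s t. 0 \<le> s \<and> s \<le> t \<and> A \<in> sets (F s)}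
     \<subseteq> Pow (space M \<times> {0..})"
proof -
  have "A \<subseteq> space M" if "A \<in> sets (F s)" "0 \<le> s" for A s
    using sets.sets_into_space[OF that(1)] space_F[OF that(2)] by simp
  then show ?thesis by fastforce
qed

lemma pred_sigma_after:
  assumes "0 \<le> d" and "Measurable.pred (F d) Q"
  shows "Measurable.pred (pred_sigma M F) (\<lambda>z. d < snd z \<and> Q (fst z))"
proof -
  define A where "A = {\<omega>\<in>space M. Q \<omega>}"
  have A: "A \<in> sets (F d)"
    using predE[OF assms(2)] space_F[OF assms(1)] by (simp add: A_def)
  have "A \<times> {d<..d + real n} \<in> sets (pred_sigma M F)" for n
  proof -
    have "d \<le> d + real n" by simp
    then have "A \<times> {d<..d + real n} \<in> {A \<times> {s<..t} | A s t. 0 \<le> s \<and> s \<le> t \<and> A \<in> sets (F s)}"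
      using A assms(1) by blast
    then show ?thesis
      unfolding pred_sigma_def by (intro in_measure_of[OF pred_sigma_generators_subset]) blast
  qed
  moreover have "{z \<in> space (pred_sigma M F). d < snd z \<and> Q (fst z)} = (\<Union>n. A \<times> {d<..d + real n})"
  proof -
    have "\<exists>n. t \<le> d + real n" for t
      using real_arch_simple[of "t - d"] by (auto simp: algebra_simps)
    then show ?thesis using assms(1) by (auto simp: space_pred_sigma A_def)
  qed
  ultimately show ?thesis
    unfolding pred_def by auto
qed

lemma pred_sigma_after_time:
  "0 \<le> d \<Longrightarrow> Measurable.pred (pred_sigma M F) (\<lambda>z. d < snd z)"
  using pred_sigma_after[of d "\<lambda>_. True"] by simp

lemma first_approach_predictable:
  assumes "adapted M F Y"
  shows "Measurable.pred (pred_sigma M F) (\<lambda>z. first_approach (\<lambda>s. Y s (fst z)) (snd z))"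
proof -
  have eq: "first_approach y t \<longleftrightarrow> 0 < t
      \<and> (\<forall>e\<in>\<rat> \<inter> {0<..}. \<exists>r\<in>\<rat> \<inter> {0..}. r < t
           \<and> (\<forall>q\<in>\<rat> \<inter> {r<..}. \<not> (q < t \<and> \<not> \<bar>y q\<bar> \<le> e)))
      \<and> (\<forall>r\<in>\<rat> \<inter> {0..}. \<not> (r < t \<and> \<not> uniformly_negative_on y (\<rat> \<inter> {0..r})))" for y t
  proof -
    txt \<open>Every atom now has the shape \<open>d < t \<and> (an \<open>F d\<close>-event)\<close> required by
      \<open>pred_sigma_after\<close>.\<close>
    have "(\<forall>q\<in>\<rat> \<inter> {r<..<t}. P q) \<longleftrightarrow> (\<forall>q\<in>\<rat> \<inter> {r<..}. \<not> (q < t \<and> \<not> P q))"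
      "(\<exists>r\<in>\<rat> \<inter> {0..<t}. P r) \<longleftrightarrow> (\<exists>r\<in>\<rat> \<inter> {0..}. r < t \<and> P r)"
      "(\<forall>r\<in>\<rat> \<inter> {0..<t}. P r) \<longleftrightarrow> (\<forall>r\<in>\<rat> \<inter> {0..}. \<not> (r < t \<and> \<not> P r))"
      for P :: "real \<Rightarrow> bool" and r by auto
    then show ?thesis
      unfolding first_approach_def left_limit_zero_def by simp
  qed
  have abs_le: "Measurable.pred (F q) (\<lambda>\<omega>. \<bar>Y q \<omega>\<bar> \<le> e)" if "0 \<le> q" for q e
  proof -
    have [measurable]: "Y q \<in> borel_measurable (F q)"
      using adapted_measurable_F[OF assms that order_refl] .
    show ?thesis by measurable
  qed
  show ?thesis
    unfolding eq
    by (intro pred_sigma_after pred_sigma_after_time pred_intros_logic(2,3) measurable_pred_countable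
        countable_Int1 countable_rat)
      (auto intro!: abs_le uniformly_negative_on_measurable_F[OF assms])
qed

lemma first_approach_time_measurable:
  assumes "adapted M F Y"
  shows "(\<lambda>\<omega>. first_approach_time (\<lambda>s. Y s \<omega>)) \<in> borel_measurable M"
proof -
  have "Measurable.pred M (\<lambda>\<omega>. uniformly_negative_on (\<lambda>s. Y s \<omega>) (\<rat> \<inter> {0..r}))" if "0 \<le> r" for r
    using measurable_from_subalg[OF subalgebra_F[OF that] uniformly_negative_on_measurable_F[OF assms that]] .
  then show ?thesis
    unfolding first_approach_time_def
    by (intro borel_measurable_real_of_ereal borel_measurable_SUP countable_Int1 countable_rat
        measurable_If predE) auto
qed

lemma graph_measurable_pred_sigma:
  assumes T: "T \<in> borel_measurable M" and nonneg: "\<And>\<omega>. \<omega> \<in> space M \<Longrightarrow> 0 \<le> T \<omega>"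
  shows "(\<lambda>\<omega>. (\<omega>, T \<omega>)) \<in> measurable M (pred_sigma M F)"
  unfolding pred_sigma_def
proof (rule measurable_measure_of[OF pred_sigma_generators_subset])
  show "(\<lambda>\<omega>. (\<omega>, T \<omega>)) \<in> space M \<rightarrow> space M \<times> {0..}"
    using nonneg by auto
  fix Z assume "Z \<in> {A \<times> {0} | A. A \<in> sets (F 0)} \<union> {A \<times> {s<..t} | A s t. 0 \<le> s \<and> s \<le> t \<and> A \<in> sets (F s)}"
  then consider (zero) A where "Z = A \<times> {0}" "A \<in> sets (F 0)"
    | (interval) A s t where "Z = A \<times> {s<..t}" "0 \<le> s" "A \<in> sets (F s)"
    by blast
  then show "(\<lambda>\<omega>. (\<omega>, T \<omega>)) -` Z \<inter> space M \<in> sets M"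
  proof cases
    case zero
    then have "(\<lambda>\<omega>. (\<omega>, T \<omega>)) -` Z \<inter> space M = A \<inter> {\<omega>\<in>space M. T \<omega> = 0}"
      by auto
    moreover have "A \<in> sets M" using zero sets_F[of 0] by auto
    ultimately show ?thesis using T by simp
  next
    case interval
    then have "(\<lambda>\<omega>. (\<omega>, T \<omega>)) -` Z \<inter> space M
        = A \<inter> {\<omega>\<in>space M. s < T \<omega>} \<inter> {\<omega>\<in>space M. T \<omega> \<le> t}"
      by auto
    moreover have "A \<in> sets M" using interval sets_F[of s] by auto
    ultimately show ?thesis using T by simp
  qed
qed

lemma right_negative_measurable:
  assumes "adapted M F Y" and T: "T \<in> borel_measurable M" and nonneg: "\<And>\<omega>. 0 \<le> T \<omega>"
  shows "Measurable.pred M (\<lambda>\<omega>. right_negative (\<lambda>s. Y s \<omega>) (T \<omega>))"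
proof -
  have eq: "right_negative y t \<longleftrightarrow> (\<exists>r\<in>\<rat> \<inter> {0..}. t < r \<and> (\<exists>e\<in>\<rat>. 0 < e
      \<and> (\<forall>q\<in>\<rat> \<inter> {0..}. \<not> (t < q \<and> \<not> (q < r \<longrightarrow> y q \<le> - e)))))" if "0 \<le> t" for y t
  proof -
    have "(\<forall>q\<in>\<rat> \<inter> {t<..<r}. P q) \<longleftrightarrow> (\<forall>q\<in>\<rat> \<inter> {0..}. \<not> (t < q \<and> \<not> (q < r \<longrightarrow> P q)))"
      "(\<exists>r\<in>\<rat> \<inter> {t<..}. Q r) \<longleftrightarrow> (\<exists>r\<in>\<rat> \<inter> {0..}. t < r \<and> Q r)"
      for P Q :: "real \<Rightarrow> bool" and r
      using that by auto
    then show ?thesis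
      unfolding right_negative_def uniformly_negative_on_def by simp
  qed
  have [measurable]: "Y q \<in> borel_measurable M" if "0 \<le> q" for q
    using adapted_measurable[OF assms(1) that] .
  have [measurable]: "T \<in> borel_measurable M" by (fact T)
  show ?thesis
    unfolding eq[OF nonneg]
    by (intro measurable_pred_countable countable_Int1 countable_rat pred_intros_logic(2,3)
        pred_intros_conj1' pred_intros_imp') auto
qed

end

section \<open>Negative jumps at the first approach\<close>

definition approach_kernel :: "(real \<Rightarrow> 'a \<Rightarrow> real) \<Rightarrow> 'a \<Rightarrow> real \<Rightarrow> real \<Rightarrow> ennreal" where
  "approach_kernel Y \<omega> t x = (if first_approach (\<lambda>s. Y s \<omega>) t \<and> x < 0 then 1 else 0)"

text \<open>Cutting off where \<open>\<nu>\<close> already charges the first approach is the predictable substitute for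
  the restriction \<open>t < \<tau>\<close> in \<open>\<Gamma>\<^sup>-\<close>: it keeps the kernel predictable and makes its \<open>\<nu>\<close>-integral
  vanish.\<close>

definition uncompensated_approach_kernel ::
    "(real \<Rightarrow> 'a \<Rightarrow> real) \<Rightarrow> ('a \<Rightarrow> (real \<times> real) measure) \<Rightarrow> 'a \<Rightarrow> real \<Rightarrow> real \<Rightarrow> ennreal" where
  "uncompensated_approach_kernel Y \<nu> \<omega> t x =
     (if first_approach (\<lambda>s. Y s \<omega>) t \<and> x < 0 \<and> rm_int (approach_kernel Y) \<nu> \<omega> t = 0 then 1 else 0)"

lemma rm_int_inf_uncompensated_approach_kernel:
  "rm_int_inf (uncompensated_approach_kernel Y \<nu>) \<nu> \<omega> = 0"
proof (cases "\<exists>t x. uncompensated_approach_kernel Y \<nu> \<omega> t x \<noteq> 0")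
  case True
  then obtain t where t: "first_approach (\<lambda>s. Y s \<omega>) t" "rm_int (approach_kernel Y) \<nu> \<omega> t = 0"
    by (auto simp: uncompensated_approach_kernel_def split: if_splits)
  have support: "s = t" if "uncompensated_approach_kernel Y \<nu> \<omega> s x \<noteq> 0" for s x
    using that first_approach_unique[OF _ t(1)]
    by (auto simp: uncompensated_approach_kernel_def split: if_splits)
  have "rm_int_inf (uncompensated_approach_kernel Y \<nu>) \<nu> \<omega>
      \<le> rm_int (uncompensated_approach_kernel Y \<nu>) \<nu> \<omega> t"
    using support by (intro rm_int_inf_le_rm_int) auto
  also have "\<dots> \<le> rm_int (approach_kernel Y) \<nu> \<omega> t"
    by (intro rm_int_mono) (simp add: uncompensated_approach_kernel_def approach_kernel_def)
  finally show ?thesis using t(2) by simp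
next
  case False
  then show ?thesis by (simp add: rm_int_inf_def)
qed

definition missed_approach_set ::
    "'a measure \<Rightarrow> (real \<Rightarrow> 'a \<Rightarrow> real) \<Rightarrow> ('a \<Rightarrow> (real \<times> real) measure) \<Rightarrow> 'a set" where
  "missed_approach_set M Y \<nu> = {\<omega>\<in>space M.
     first_approach (\<lambda>s. Y s \<omega>) (first_approach_time (\<lambda>s. Y s \<omega>))
     \<and> right_negative (\<lambda>s. Y s \<omega>) (first_approach_time (\<lambda>s. Y s \<omega>))
     \<and> rm_int (approach_kernel Y) \<nu> \<omega> (first_approach_time (\<lambda>s. Y s \<omega>)) = 0}"

lemma one_le_rm_int_inf_jump_measure:
  assumes "cadlag (\<lambda>s. X s \<omega>)" and b: "continuous_on {0..} b"
    and "\<omega> \<in> missed_approach_set M (\<lambda>s \<omega>. X s \<omega> - b s) \<nu>"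
  shows "1 \<le> rm_int_inf (uncompensated_approach_kernel (\<lambda>s \<omega>. X s \<omega> - b s) \<nu>) (jump_measure X) \<omega>"
proof -
  define t where "t = first_approach_time (\<lambda>s. X s \<omega> - b s)"
  have t: "first_approach (\<lambda>s. X s \<omega> - b s) t" "right_negative (\<lambda>s. X s \<omega> - b s) t"
    "rm_int (approach_kernel (\<lambda>s \<omega>. X s \<omega> - b s)) \<nu> \<omega> t = 0"
    using assms(3) by (auto simp: missed_approach_set_def t_def)
  have "0 < t" using t(1) by (simp add: first_approach_def)
  have "X t \<omega> - b t < 0"
    using t(2) cadlag_diff_continuous[OF assms(1) b] \<open>0 < t\<close>
    by (subst right_negative_iff[symmetric]) (auto simp: cadlag_def)
  moreover have jump: "jump (\<lambda>s. X s \<omega>) t = X t \<omega> - b t"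
    using left_lim_at_first_approach[OF assms(1) b t(1)] by (simp add: jump_def)
  ultimately have "1 = uncompensated_approach_kernel (\<lambda>s \<omega>. X s \<omega> - b s) \<nu> \<omega> t (jump (\<lambda>s. X s \<omega>) t)"
    using t by (simp add: uncompensated_approach_kernel_def)
  also have "\<dots> \<le> rm_int_inf (uncompensated_approach_kernel (\<lambda>s \<omega>. X s \<omega> - b s) \<nu>) (jump_measure X) \<omega>"
    using jump \<open>X t \<omega> - b t < 0\<close> \<open>0 < t\<close>
    by (intro jump_le_rm_int_inf_jump_measure) auto
  finally show ?thesis .
qed

lemma hit_time_gt_imp_below:
  assumes "ereal t < hit_time X b \<omega>" and "0 \<le> s" and "s \<le> t"
  shows "X s \<omega> - b s < 0"
proof (rule ccontr)
  assume "\<not> X s \<omega> - b s < 0"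
  then have "hit_time X b \<omega> \<le> ereal s"
    unfolding hit_time_def using \<open>0 \<le> s\<close> by (intro INF_lower) auto
  also have "ereal s \<le> ereal t" using assms(3) by simp
  finally show False using assms(1) by simp
qed

lemma missed_approach_set_if_sup_nonneg:
  assumes "\<omega> \<in> space M" and "cadlag (\<lambda>s. X s \<omega>)" and b: "continuous_on {0..} b"
    and Gamma: "\<forall>t\<ge>0. rm_int (\<lambda>\<omega> s x. indicator (Gamma_minus M X b) (\<omega>, s, x)) \<nu> \<omega> t = 0"
    and "0 \<le> t" and before_hit: "ereal t < hit_time X b \<omega>"
    and not_neg: "\<not> (SUP s\<in>{0..t}. X s \<omega> - b s) < 0"
  shows "\<omega> \<in> missed_approach_set M (\<lambda>s \<omega>. X s \<omega> - b s) \<nu>"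
proof -
  define y where "y = (\<lambda>s. X s \<omega> - b s)"
  have cadlag_y: "cadlag y"
    unfolding y_def by (rule cadlag_diff_continuous[OF assms(2) b])
  have neg: "\<forall>s\<in>{0..t}. y s < 0"
    using hit_time_gt_imp_below[OF before_hit] by (simp add: y_def)
  obtain u where "0 < u" "u \<le> t" and u: "first_approach y u"
    using first_approach_exists[OF cadlag_y \<open>0 \<le> t\<close> neg] not_neg by (auto simp: y_def)
  have "right_negative y u"
    using right_negative_iff[of u y] cadlag_y neg \<open>0 < u\<close> \<open>u \<le> t\<close> by (simp add: cadlag_def)
  moreover have "rm_int (approach_kernel (\<lambda>s \<omega>. X s \<omega> - b s)) \<nu> \<omega> u
      \<le> rm_int (\<lambda>\<omega> s x. indicator (Gamma_minus M X b) (\<omega>, s, x)) \<nu> \<omega> u"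
  proof (rule rm_int_mono)
    fix s x :: real assume "0 \<le> s" "s \<le> u"
    show "approach_kernel (\<lambda>s \<omega>. X s \<omega> - b s) \<omega> s x \<le> indicator (Gamma_minus M X b) (\<omega>, s, x)"
    proof (cases "first_approach y s \<and> x < 0")
      case True
      then have "s = u" using first_approach_unique[OF _ u] by blast
      have "ereal u \<le> ereal t" using \<open>u \<le> t\<close> by simp
      then have "ereal u < hit_time X b \<omega>"
        using before_hit by (rule order.strict_trans1)
      moreover have "left_lim (\<lambda>s. X s \<omega>) u = b u"
        using left_lim_at_first_approach[OF assms(2) b] u by (simp add: y_def)
      ultimately have "(\<omega>, s, x) \<in> Gamma_minus M X b"
        using True \<open>s = u\<close> assms(1) \<open>0 \<le> s\<close> by (simp add: Gamma_minus_def)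
      then show ?thesis by (simp add: approach_kernel_def)
    qed (auto simp: approach_kernel_def y_def)
  qed
  ultimately show ?thesis
    using u assms(1) Gamma \<open>0 < u\<close> first_approach_time_eq[OF u]
    by (simp add: missed_approach_set_def y_def)
qed

context
  fixes M :: "'a measure" and F :: "real \<Rightarrow> 'a measure"
  assumes filtration: "usual_filtration M F"
begin

lemma approach_kernel_predictable:
  assumes "adapted M F Y"
  shows "predictable_fun M F (approach_kernel Y)"
proof -
  note [measurable] = first_approach_predictable[OF filtration assms]
  have eq: "(\<lambda>((\<omega>, t), x). approach_kernel Y \<omega> t x)
      = (\<lambda>z. if first_approach (\<lambda>s. Y s (fst (fst z))) (snd (fst z)) \<and> snd z < 0 then 1 else 0)"
    by (auto simp: approach_kernel_def fun_eq_iff)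
  show ?thesis
    unfolding predictable_fun_def eq by measurable
qed

lemma rm_int_approach_kernel_measurable:
  assumes "adapted M F Y" and "predictable_random_measure M F \<nu>"
  shows "(\<lambda>z. rm_int (approach_kernel Y) \<nu> (fst z) (snd z)) \<in> borel_measurable (pred_sigma M F)"
  using assms(2) approach_kernel_predictable[OF assms(1)]
  unfolding predictable_random_measure_def split_beta' by blast

lemma uncompensated_approach_kernel_predictable:
  assumes "adapted M F Y" and "predictable_random_measure M F \<nu>"
  shows "predictable_fun M F (uncompensated_approach_kernel Y \<nu>)"
proof -
  note [measurable] = first_approach_predictable[OF filtration assms(1)]
    rm_int_approach_kernel_measurable[OF assms]
  have eq: "(\<lambda>((\<omega>, t), x). uncompensated_approach_kernel Y \<nu> \<omega> t x)
      = (\<lambda>z. if first_approach (\<lambda>s. Y s (fst (fst z))) (snd (fst z)) \<and> snd z < 0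
               \<and> rm_int (approach_kernel Y) \<nu> (fst (fst z)) (snd (fst z)) = 0 then 1 else 0)"
    by (auto simp: uncompensated_approach_kernel_def fun_eq_iff)
  show ?thesis
    unfolding predictable_fun_def eq by measurable
qed

lemma missed_approach_set_sets:
  assumes "adapted M F Y" and "predictable_random_measure M F \<nu>"
  shows "missed_approach_set M Y \<nu> \<in> sets M"
proof -
  define T where "T \<omega> = first_approach_time (\<lambda>s. Y s \<omega>)" for \<omega>
  have T: "T \<in> borel_measurable M"
    unfolding T_def by (rule first_approach_time_measurable[OF filtration assms(1)])
  have graph: "(\<lambda>\<omega>. (\<omega>, T \<omega>)) \<in> measurable M (pred_sigma M F)"
    using graph_measurable_pred_sigma[OF filtration T] first_approach_time_nonneg by (simp add: T_def)
  have "Measurable.pred M (\<lambda>\<omega>. first_approach (\<lambda>s. Y s \<omega>) (T \<omega>))"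
    using measurable_compose[OF graph first_approach_predictable[OF filtration assms(1)]] by simp
  moreover have "Measurable.pred M (\<lambda>\<omega>. right_negative (\<lambda>s. Y s \<omega>) (T \<omega>))"
    using right_negative_measurable[OF filtration assms(1) T] first_approach_time_nonneg
    by (simp add: T_def)
  moreover have "(\<lambda>\<omega>. rm_int (approach_kernel Y) \<nu> \<omega> (T \<omega>)) \<in> borel_measurable M"
    using measurable_compose[OF graph rm_int_approach_kernel_measurable[OF assms]] by simp
  ultimately show ?thesis
    unfolding missed_approach_set_def T_def[symmetric] by measurable
qed

lemma missed_approach_set_null:
  assumes "adapted M F X" and "cadlag_process M X" and b: "continuous_on {0..} b"
    and compensator: "compensator M F (jump_measure X) \<nu>"
  shows "missed_approach_set M (\<lambda>s \<omega>. X s \<omega> - b s) \<nu> \<in> null_sets M"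
proof -
  define Y where "Y = (\<lambda>s \<omega>. X s \<omega> - b s)"
  define W where "W = uncompensated_approach_kernel Y \<nu>"
  have adapted: "adapted M F Y"
    unfolding Y_def by (rule adapted_diff_deterministic[OF assms(1)])
  have prm: "predictable_random_measure M F \<nu>"
    using compensator by (simp add: compensator_def)
  have sets: "missed_approach_set M Y \<nu> \<in> sets M"
    by (rule missed_approach_set_sets[OF adapted prm])
  have "emeasure M (missed_approach_set M Y \<nu>) = (\<integral>\<^sup>+ \<omega>. indicator (missed_approach_set M Y \<nu>) \<omega> \<partial>M)"
    using sets by simp
  also have "\<dots> \<le> (\<integral>\<^sup>+ \<omega>. rm_int_inf W (jump_measure X) \<omega> \<partial>M)"
    using one_le_rm_int_inf_jump_measure[where X = X, OF _ b] assms(2)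
    by (intro nn_integral_mono) (auto simp: W_def Y_def cadlag_process_def split: split_indicator)
  also have "\<dots> = (\<integral>\<^sup>+ \<omega>. rm_int_inf W \<nu> \<omega> \<partial>M)"
    using compensator uncompensated_approach_kernel_predictable[OF adapted prm]
    by (simp add: compensator_def W_def)
  also have "\<dots> = 0"
    by (simp add: W_def rm_int_inf_uncompensated_approach_kernel)
  finally show ?thesis
    using sets by (simp add: Y_def null_sets_def)
qed

end

theorem proposition3p7:
  fixes M :: "'a measure" and F :: "real \<Rightarrow> 'a measure"
    and X :: "real \<Rightarrow> 'a \<Rightarrow> real" and b :: "real \<Rightarrow> real"
    and \<nu> :: "'a \<Rightarrow> (real \<times> real) measure"
  assumes "usual_filtration M F"
    and "semimartingale M F X"
    and "continuous_on {0..} b"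
    and "\<forall>\<omega>\<in>space M. X 0 \<omega> < b 0"
    and "compensator M F (jump_measure X) \<nu>"
    and "AE \<omega> in M. \<forall>t\<ge>0.
           rm_int (\<lambda>\<omega> s x. indicator (Gamma_minus M X b) (\<omega>, s, x)) \<nu> \<omega> t = 0"
  shows "AE \<omega> in M. \<forall>t\<ge>0. ereal t < hit_time X b \<omega> \<longrightarrow>
           (SUP s\<in>{0..t}. X s \<omega> - b s) < 0"
proof -
  have adapted: "adapted M F X" and cadlag: "cadlag_process M X"
    using assms(2) by (simp_all add: semimartingale_def)
  have "missed_approach_set M (\<lambda>s \<omega>. X s \<omega> - b s) \<nu> \<in> null_sets M"
    by (rule missed_approach_set_null[OF assms(1) adapted cadlag assms(3,5)])
  from AE_not_in[OF this] assms(6) AE_space show ?thesis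
  proof eventually_elim
    case (elim \<omega>)
    then have "cadlag (\<lambda>s. X s \<omega>)"
      using cadlag by (simp add: cadlag_process_def)
    show ?case
    proof (intro allI impI)
      fix t :: real assume "0 \<le> t" and "ereal t < hit_time X b \<omega>"
      then show "(SUP s\<in>{0..t}. X s \<omega> - b s) < 0"
        using missed_approach_set_if_sup_nonneg[where X = X and b = b and \<nu> = \<nu> and \<omega> = \<omega>]
          \<open>cadlag (\<lambda>s. X s \<omega>)\<close> assms(3) elim by blast
    qed
  qed
qed

end
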